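(* If $G\in\mathbb{G}_\pi$ and $S\in st(G)$, then $\mathcal{R}_S(G)\in\mathbb{G}_\pi$. In particular, no loop of $G$ and no loop of any reduction of $G$ can have weight $\lambda$.
   Context: Let $\mathbb{W}$ be the field of rational functions $p(\lambda)/q(\lambda)$ in a complex variable $\lambda$ with $p,q\in\mathbb{C}[\lambda]$, $q\neq 0$. For $w=p/q\in\mathbb{W}$ let $\pi(w)=\deg p-\deg q$ (the zero function is regarded as satisfying $\pi\le 0$). A graph $G=(V,E,\omega)$ is a finite directed graph with vertex set $V=\{v_1,\dots,v_n\}$, edge set $E$ (loops allowed, at most one edge $e_{ij}$ from $v_i$ to $v_j$) and weights $\omega:E\to\mathbb{W}\setminus\{0\}$, with $\omega(e_{ij})=0$ if there is no such edge; $M(G)_{ij}=\omega(e_{ij})$. $\mathbb{G}_\pi$ is the set of graphs $G$ with $\pi(M(G)_{ij})\le 0$ for every entry. $\bar S=V\setminus S$; $\ell(G)$ is $G$ with loops removed; $G|_U$ is the induced subgraph. A path is a sequence of distinct vertices $u_1,\dots,u_m$ ($m\ge2$) with edges $u_k\to u_{k+1}$; a cycle is such a sequence with $u_1=u_m$ and $u_1,\dots,u_{m-1}$ distinct; $u_2,\dots,u_{m-1}$ are interior vertices. A nonempty $S\subseteq V$ is a structural set ($S\in st(G)$) if $\ell(G)|_{\bar S}$ has no cycles and $\omega(e_{ii})\neq\lambda$ for all $v_i\in\bar S$. For $v_i,v_j\in S$, $\mathcal{B}_{ij}(G;S)$ is the set of paths or cycles from $v_i$ to $v_j$ with no interior vertex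 in $S$; for $\beta=u_1,\dots,u_m$, $\mathcal{P}_\omega(\beta)=\omega(u_1u_2)\prod_{k=2}^{m-1}\frac{\omega(u_ku_{k+1})}{\lambda-\omega(u_ku_k)}$. The reduction $\mathcal{R}_S(G)$ has vertex set $S$, an edge $v_i\to v_j$ iff $\mathcal{B}_{ij}(G;S)\ne\emptyset$, with weight $\sum_{\beta\in\mathcal{B}_{ij}(G;S)}\mathcal{P}_\omega(\beta)$. A reduction of $G$ means a graph obtained from $G$ by a finite sequence of such reductions (each over a structural set of the current graph). *)

theory Defs
  imports "HOL-Computational_Algebra.Computational_Algebra"
begin

type_synonym ratfun = "complex poly fract"

definition lam :: ratfun where
  "lam = Fract [:0, 1:] 1"

text \<open>pi(p/q) = deg p - deg q (well defined for w \<noteq> 0, independent of the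
  representative; for the zero function we set 0, so pi 0 \<le> 0).\<close>
definition pi_deg :: "ratfun \<Rightarrow> int" where
  "pi_deg w = (if w = 0 then 0 else
     (THE d. \<exists>p q. q \<noteq> 0 \<and> w = Fract p q \<and> d = int (degree p) - int (degree q)))"

text \<open>A weighted digraph: a vertex set and a weight function; there is an edge i \<rightarrow> j iff
  the weight is nonzero (M(G)_ij = weight).\<close>
type_synonym 'v graph = "'v set \<times> ('v \<Rightarrow> 'v \<Rightarrow> ratfun)"

definition verts :: "'v graph \<Rightarrow> 'v set" where "verts G = fst G"
definition wt :: "'v graph \<Rightarrow> 'v \<Rightarrow> 'v \<Rightarrow> ratfun" where "wt G = snd G"

definition wf_graph :: "'v graph \<Rightarrow> bool" where
  "wf_graph G \<longleftrightarrow> finite (verts G) \<and>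
     (\<forall>i j. wt G i j \<noteq> 0 \<longrightarrow> i \<in> verts G \<and> j \<in> verts G)"

definition in_G_pi :: "'v graph \<Rightarrow> bool" where
  "in_G_pi G \<longleftrightarrow> (\<forall>i\<in>verts G. \<forall>j\<in>verts G. pi_deg (wt G i j) \<le> 0)"

definition walk_edges :: "'v graph \<Rightarrow> 'v list \<Rightarrow> bool" where
  "walk_edges G us \<longleftrightarrow> (\<forall>k. Suc k < length us \<longrightarrow> wt G (us ! k) (us ! Suc k) \<noteq> 0)"

definition is_cycle :: "'v graph \<Rightarrow> 'v list \<Rightarrow> bool" where
  "is_cycle G us \<longleftrightarrow> length us \<ge> 2 \<and> walk_edges G us \<and> hd us = last us \<and> distinct (butlast us)"

definition is_path :: "'v graph \<Rightarrow> 'v list \<Rightarrow> bool" where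
  "is_path G us \<longleftrightarrow> length us \<ge> 2 \<and> walk_edges G us \<and> distinct us"

definition restrict_noloops :: "'v graph \<Rightarrow> 'v set \<Rightarrow> 'v graph" where
  "restrict_noloops G U = (verts G \<inter> U,
     (\<lambda>i j. if i \<in> U \<and> j \<in> U \<and> i \<noteq> j then wt G i j else 0))"

definition structural_sets :: "'v graph \<Rightarrow> 'v set set" ("st") where
  "st G = {S. S \<subseteq> verts G \<and> S \<noteq> {} \<and>
     \<not> (\<exists>us. is_cycle (restrict_noloops G (verts G - S)) us) \<and>
     (\<forall>i \<in> verts G - S. wt G i i \<noteq> lam)}"

definition branches :: "'v graph \<Rightarrow> 'v set \<Rightarrow> 'v \<Rightarrow> 'v \<Rightarrow> 'v list set" where
  "branches G S i j = {us. (is_path G us \<or> is_cycle G us) \<and> hd us = i \<and> last us = j \<and>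
     (\<forall>k. 0 < k \<and> k < length us - 1 \<longrightarrow> us ! k \<notin> S)}"

text \<open>P_omega(u1..um) = w(u1u2) * prod_{k=2}^{m-1} w(uk u(k+1)) / (lambda - w(uk uk)) (1-indexed).\<close>
definition branch_prod :: "'v graph \<Rightarrow> 'v list \<Rightarrow> ratfun" where
  "branch_prod G us = wt G (us ! 0) (us ! 1) *
     (\<Prod>k\<in>{1..<length us - 1}. wt G (us ! k) (us ! Suc k) / (lam - wt G (us ! k) (us ! k)))"

definition reduce :: "'v set \<Rightarrow> 'v graph \<Rightarrow> 'v graph" ("\<R>") where
  "\<R> S G = (S, (\<lambda>i j. if i \<in> S \<and> j \<in> S then (\<Sum>\<beta>\<in>branches G S i j. branch_prod G \<beta>) else 0))"

inductive is_reduction :: "'v graph \<Rightarrow> 'v graph \<Rightarrow> bool" where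
  one: "S \<in> st G \<Longrightarrow> is_reduction G (\<R> S G)"
| more: "is_reduction G H \<Longrightarrow> S \<in> st H \<Longrightarrow> is_reduction G (\<R> S H)"

end

theory Submission
  imports Defs
begin

text \<open>Proper functions form a subring of the rational functions that is
  closed under w \<mapsto> 1/(\<lambda> - w), because \<lambda> - w has a numerator of degree exactly one
  more than its denominator. Every weight of the reduction is a sum of products of edge
  weights of G and factors 1/(\<lambda> - w(e_ii)), hence proper; and \<lambda> itself is not
  proper, so no loop of a graph with proper weights has weight \<lambda>.\<close>

definition proper :: "'a::idom poly fract \<Rightarrow> bool" where
  "proper w \<longleftrightarrow> (\<exists>p q. q \<noteq> 0 \<and> w = Fract p q \<and> degree p \<le> degree q)"

lemma degree_diff_Fract_eq:
  fixes p q p' q' :: "'a::idom poly"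
  assumes "Fract p q \<noteq> 0" "q \<noteq> 0" "q' \<noteq> 0" "Fract p q = Fract p' q'"
  shows "int (degree p) - int (degree q) = int (degree p') - int (degree q')"
proof -
  have "p \<noteq> 0" "p' \<noteq> 0"
    using assms by (auto simp: Zero_fract_def eq_fract)
  moreover have "p * q' = p' * q"
    using assms by (simp add: eq_fract)
  ultimately have "degree p + degree q' = degree p' + degree q"
    using assms(2,3) by (metis degree_mult_eq)
  thus ?thesis by linarith
qed

lemma pi_deg_Fract:
  assumes "q \<noteq> 0" "Fract p q \<noteq> 0"
  shows "pi_deg (Fract p q) = int (degree p) - int (degree q)"
proof -
  have "(THE d. \<exists>p' q'. q' \<noteq> 0 \<and> Fract p q = Fract p' q' \<and>
          d = int (degree p') - int (degree q')) = int (degree p) - int (degree q)"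
  proof (rule the_equality)
    show "\<exists>p' q'. q' \<noteq> 0 \<and> Fract p q = Fract p' q' \<and>
            int (degree p) - int (degree q) = int (degree p') - int (degree q')"
      using assms(1) by blast
  next
    fix d assume "\<exists>p' q'. q' \<noteq> 0 \<and> Fract p q = Fract p' q' \<and>
                    d = int (degree p') - int (degree q')"
    then obtain p' q' where "q' \<noteq> 0" "Fract p q = Fract p' q'"
        "d = int (degree p') - int (degree q')"
      by blast
    with assms show "d = int (degree p) - int (degree q)"
      using degree_diff_Fract_eq by metis
  qed
  thus ?thesis using assms(2) by (simp add: pi_deg_def)
qed

lemma proper_0 [simp]: "proper 0"
  unfolding proper_def by (metis Zero_fract_def degree_0 le0 one_neq_zero)

lemma proper_1 [simp]: "proper 1"
  unfolding proper_def by (metis One_fract_def le_refl one_neq_zero)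

lemma pi_deg_le_0_iff_proper: "pi_deg w \<le> 0 \<longleftrightarrow> proper w"
proof (cases "w = 0")
  case True
  then show ?thesis by (simp add: pi_deg_def)
next
  case False
  obtain p q where w: "w = Fract p q" "q \<noteq> 0" by (rule Fract_cases)
  show ?thesis
  proof
    assume "pi_deg w \<le> 0"
    thus "proper w" using w False pi_deg_Fract unfolding proper_def by fastforce
  next
    assume "proper w"
    then obtain p' q' where "q' \<noteq> 0" "w = Fract p' q'" "degree p' \<le> degree q'"
      unfolding proper_def by auto
    thus "pi_deg w \<le> 0" using False pi_deg_Fract by auto
  qed
qed

lemma proper_add:
  assumes "proper a" "proper b"
  shows "proper (a + b)"
proof -
  obtain p q where a: "q \<noteq> 0" "a = Fract p q" "degree p \<le> degree q"
    using assms(1) unfolding proper_def by blast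
  obtain p' q' where b: "q' \<noteq> 0" "b = Fract p' q'" "degree p' \<le> degree q'"
    using assms(2) unfolding proper_def by blast
  have "degree (p * q' + p' * q) \<le> max (degree (p * q')) (degree (p' * q))"
    by (rule degree_add_le_max)
  also have "\<dots> \<le> degree q + degree q'"
    using degree_mult_le[of p q'] degree_mult_le[of p' q] a b by auto
  also have "\<dots> = degree (q * q')" using a b by (simp add: degree_mult_eq)
  finally show ?thesis
    unfolding proper_def using a b by (intro exI[of _ "p * q' + p' * q"] exI[of _ "q * q'"]) simp
qed

lemma proper_mult:
  assumes "proper a" "proper b"
  shows "proper (a * b)"
proof -
  obtain p q where a: "q \<noteq> 0" "a = Fract p q" "degree p \<le> degree q"
    using assms(1) unfolding proper_def by blast
  obtain p' q' where b: "q' \<noteq> 0" "b = Fract p' q'" "degree p' \<le> degree q'"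
    using assms(2) unfolding proper_def by blast
  have "degree (p * p') \<le> degree q + degree q'"
    using degree_mult_le[of p p'] a b by auto
  also have "\<dots> = degree (q * q')" using a b by (simp add: degree_mult_eq)
  finally show ?thesis
    unfolding proper_def using a b by (intro exI[of _ "p * p'"] exI[of _ "q * q'"]) simp
qed

lemma proper_sum: "(\<And>x. x \<in> A \<Longrightarrow> proper (f x)) \<Longrightarrow> proper (sum f A)"
  by (induction A rule: infinite_finite_induct) (auto intro: proper_add)

lemma proper_prod: "(\<And>x. x \<in> A \<Longrightarrow> proper (f x)) \<Longrightarrow> proper (prod f A)"
  by (induction A rule: infinite_finite_induct) (auto intro: proper_mult)

lemma proper_inverse_X_minus:
  assumes "proper b"
  shows "proper (inverse (Fract [:0, 1:] 1 - b))"
proof -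
  obtain p q where b: "q \<noteq> 0" "b = Fract p q" "degree p \<le> degree q"
    using assms unfolding proper_def by blast
  define r where "r = [:0, 1:] * q - p"
  have "degree r = Suc (degree q)"
    unfolding r_def using b degree_add_eq_left[of "- p" "[:0, 1:] * q"]
    by (simp add: degree_mult_eq)
  hence "r \<noteq> 0" by auto
  have "Fract [:0, 1:] 1 - b = Fract r q" unfolding r_def using b by simp
  hence "inverse (Fract [:0, 1:] 1 - b) = Fract q r" by simp
  moreover have "degree q \<le> degree r" using \<open>degree r = Suc (degree q)\<close> by simp
  ultimately show ?thesis unfolding proper_def using \<open>r \<noteq> 0\<close> by blast
qed

lemma not_proper_X: "\<not> proper (Fract [:0, 1:] 1 :: 'a::idom poly fract)"
proof
  assume "proper (Fract [:0, 1:] 1 :: 'a poly fract)"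
  then obtain p q :: "'a poly" where "q \<noteq> 0" "Fract [:0, 1:] 1 = Fract p q" "degree p \<le> degree q"
    unfolding proper_def by blast
  moreover from this have "p = pCons 0 q" by (simp add: eq_fract)
  ultimately show False by simp
qed

lemma proper_wt:
  assumes "wf_graph G" "in_G_pi G"
  shows "proper (wt G i j)"
proof (cases "i \<in> verts G \<and> j \<in> verts G")
  case True
  then show ?thesis using assms(2) pi_deg_le_0_iff_proper unfolding in_G_pi_def by auto
next
  case False
  then have "wt G i j = 0" using assms(1) unfolding wf_graph_def by auto
  then show ?thesis by simp
qed

lemma proper_branch_prod:
  assumes "wf_graph G" "in_G_pi G"
  shows "proper (branch_prod G \<beta>)"
  unfolding branch_prod_def lam_def divide_inverse
  by (intro proper_mult proper_prod proper_inverse_X_minus proper_wt[OF assms])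

lemma wf_graph_reduce:
  assumes "wf_graph G" "S \<in> st G"
  shows "wf_graph (\<R> S G)"
proof -
  have "S \<subseteq> verts G" using assms(2) unfolding structural_sets_def by auto
  hence "finite S" using assms(1) finite_subset unfolding wf_graph_def by auto
  thus ?thesis unfolding wf_graph_def reduce_def verts_def wt_def by auto
qed

lemma in_G_pi_reduce:
  assumes "wf_graph G" "in_G_pi G"
  shows "in_G_pi (\<R> S G)"
proof -
  have "proper (wt (\<R> S G) i j)" for i j
    unfolding reduce_def wt_def by (simp add: proper_sum proper_branch_prod[OF assms])
  thus ?thesis unfolding in_G_pi_def pi_deg_le_0_iff_proper by simp
qed

lemma is_reduction_in_G_pi:
  assumes "is_reduction G H" "wf_graph G" "in_G_pi G"
  shows "wf_graph H \<and> in_G_pi H"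
  using assms
  by (induction rule: is_reduction.induct) (blast intro: wf_graph_reduce in_G_pi_reduce)+

lemma in_G_pi_loop_neq_lam:
  assumes "in_G_pi G" "i \<in> verts G"
  shows "wt G i i \<noteq> lam"
proof
  assume "wt G i i = lam"
  moreover have "pi_deg (wt G i i) \<le> 0"
    using assms unfolding in_G_pi_def by blast
  ultimately have "proper lam"
    by (simp only: pi_deg_le_0_iff_proper)
  thus False
    unfolding lam_def by (rule not_proper_X[THEN notE])
qed

theorem lemma1:
  fixes G :: "'v graph" and S :: "'v set"
  assumes "wf_graph G" and "in_G_pi G" and "S \<in> st G"
  shows "in_G_pi (\<R> S G)
    \<and> (\<forall>i\<in>verts G. wt G i i \<noteq> lam)
    \<and> (\<forall>H. is_reduction G H \<longrightarrow> (\<forall>i\<in>verts H. wt H i i \<noteq> lam))"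
proof (intro conjI allI impI ballI)
  show "in_G_pi (\<R> S G)"
    using assms(1,2) by (rule in_G_pi_reduce)
next
  fix i assume "i \<in> verts G"
  with assms(2) show "wt G i i \<noteq> lam"
    by (rule in_G_pi_loop_neq_lam)
next
  fix H i assume "is_reduction G H" "i \<in> verts H"
  have "in_G_pi H"
    using is_reduction_in_G_pi[OF \<open>is_reduction G H\<close> assms(1,2)] by (rule conjunct2)
  from this \<open>i \<in> verts H\<close> show "wt H i i \<noteq> lam"
    by (rule in_G_pi_loop_neq_lam)
qed

end
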